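(* For each pair of integers $k\ge l\ge0$, $S_u^{k-l+1}$ annihilates $\mathcal{H}_{k,l}(\mathbb{R}^{2m},\mathbb{C})$, whereas for every integer $0\le j\le k-l$ the operator $S_u^j$ is not identically zero on $\mathcal{H}_{k,l}(\mathbb{R}^{2m},\mathbb{C})$.
   Context: Fix an integer $m>4$. For $x,u\in\mathbb{R}^m$ let $\mathcal{P}_{p,q}(\mathbb{R}^{2m},\mathbb{C})$ be complex polynomials of degree $p$ in $x$ and $q$ in $u$. Write $|x|^2=\sum x_j^2$, $|u|^2$ similarly, $\Delta_x=\sum\partial_{x_j}^2$, $\Delta_u=\sum\partial_{u_j}^2$, $\langle\partial_u,\partial_x\rangle=\sum\partial_{u_j}\partial_{x_j}$, $\langle x,\partial_u\rangle=\sum x_j\partial_{u_j}$, $\langle u,\partial_x\rangle=\sum u_j\partial_{x_j}$, $\ker(D_1,\dots,D_r)=\bigcap\ker D_i$. Every $P\in\mathcal{P}_{p,q}$ is uniquely $\sum_{a,b\ge0}|x|^{2a}|u|^{2b}H'_{p-2a,q-2b}$ with $H'_{p-2a,q-2b}\in\mathcal{P}_{p-2a,q-2b}\cap\ker(\Delta_x,\Delta_u)$; $\pi_{\mathfrak{s}}P:=H'_{p,q}$. $S_u=\pi_{\mathfrak{s}}\langle u,\partial_x\rangle$ on $\ker(\Delta_x,\Delta_u)$. For $k\ge l\ge0$, $\mathcal{H}_{k,l}=\mathcal{P}_{k,l}\cap\ker(\Delta_x,\Delta_u,\langle\partial_u,\partial_x\rangle,\langle x,\partial_u\rangle)$. 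*)

theory Defs
  imports Complex_Main "HOL-Library.Poly_Mapping" "HOL-Library.Function_Algebras"
begin

text \<open>Complex polynomials in the 2m real variables x_1..x_m, u_1..u_m, represented by their
coefficient function on monomials. Variable Inl j stands for x_(j+1), Inr j for u_(j+1) (j < m).\<close>

type_synonym mono = "(nat + nat) \<Rightarrow>\<^sub>0 nat"
type_synonym cpoly = "mono \<Rightarrow> complex"

definition xdeg :: "nat \<Rightarrow> mono \<Rightarrow> nat" where
  "xdeg m \<alpha> = (\<Sum>j<m. Poly_Mapping.lookup \<alpha> (Inl j))"

definition udeg :: "nat \<Rightarrow> mono \<Rightarrow> nat" where
  "udeg m \<alpha> = (\<Sum>j<m. Poly_Mapping.lookup \<alpha> (Inr j))"

definition Pspace :: "nat \<Rightarrow> nat \<Rightarrow> nat \<Rightarrow> cpoly set" where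
  "Pspace m p q = {P. finite {\<alpha>. P \<alpha> \<noteq> 0} \<and>
     (\<forall>\<alpha>. P \<alpha> \<noteq> 0 \<longrightarrow> Poly_Mapping.keys \<alpha> \<subseteq> Inl ` {..<m} \<union> Inr ` {..<m} \<and> xdeg m \<alpha> = p \<and> udeg m \<alpha> = q)}"

definition pderiv_var :: "nat + nat \<Rightarrow> cpoly \<Rightarrow> cpoly" where
  "pderiv_var v P = (\<lambda>\<alpha>. of_nat (Poly_Mapping.lookup \<alpha> v + 1) * P (\<alpha> + Poly_Mapping.single v 1))"

definition mult_var :: "nat + nat \<Rightarrow> cpoly \<Rightarrow> cpoly" where
  "mult_var v P = (\<lambda>\<alpha>. if 0 < Poly_Mapping.lookup \<alpha> v then P (\<alpha> - Poly_Mapping.single v 1) else 0)"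

definition Delta_x :: "nat \<Rightarrow> cpoly \<Rightarrow> cpoly" where
  "Delta_x m P = (\<Sum>j<m. pderiv_var (Inl j) (pderiv_var (Inl j) P))"

definition Delta_u :: "nat \<Rightarrow> cpoly \<Rightarrow> cpoly" where
  "Delta_u m P = (\<Sum>j<m. pderiv_var (Inr j) (pderiv_var (Inr j) P))"

definition du_dx :: "nat \<Rightarrow> cpoly \<Rightarrow> cpoly" where
  "du_dx m P = (\<Sum>j<m. pderiv_var (Inr j) (pderiv_var (Inl j) P))"

definition x_du :: "nat \<Rightarrow> cpoly \<Rightarrow> cpoly" where
  "x_du m P = (\<Sum>j<m. mult_var (Inl j) (pderiv_var (Inr j) P))"

definition u_dx :: "nat \<Rightarrow> cpoly \<Rightarrow> cpoly" where
  "u_dx m P = (\<Sum>j<m. mult_var (Inr j) (pderiv_var (Inl j) P))"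

definition normsq_x :: "nat \<Rightarrow> cpoly \<Rightarrow> cpoly" where
  "normsq_x m P = (\<Sum>j<m. mult_var (Inl j) (mult_var (Inl j) P))"

definition normsq_u :: "nat \<Rightarrow> cpoly \<Rightarrow> cpoly" where
  "normsq_u m P = (\<Sum>j<m. mult_var (Inr j) (mult_var (Inr j) P))"

definition pi_s :: "nat \<Rightarrow> nat \<Rightarrow> nat \<Rightarrow> cpoly \<Rightarrow> cpoly" where
  "pi_s m p q P = (THE H. \<exists>Hs :: nat \<Rightarrow> nat \<Rightarrow> cpoly.
      (\<forall>a \<le> p div 2. \<forall>b \<le> q div 2. Hs a b \<in> Pspace m (p - 2*a) (q - 2*b)
          \<and> Delta_x m (Hs a b) = 0 \<and> Delta_u m (Hs a b) = 0)
      \<and> P = (\<Sum>a\<le>p div 2. \<Sum>b\<le>q div 2. (normsq_x m ^^ a) ((normsq_u m ^^ b) (Hs a b)))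
      \<and> H = Hs 0 0)"

definition S_u :: "nat \<Rightarrow> nat \<Rightarrow> nat \<Rightarrow> cpoly \<Rightarrow> cpoly" where
  "S_u m p q P = pi_s m (p - 1) (q + 1) (u_dx m P)"

fun S_u_pow :: "nat \<Rightarrow> nat \<Rightarrow> nat \<Rightarrow> nat \<Rightarrow> cpoly \<Rightarrow> cpoly" where
  "S_u_pow m 0 p q P = P"
| "S_u_pow m (Suc j) p q P = S_u m (p - j) (q + j) (S_u_pow m j p q P)"

definition Hspace :: "nat \<Rightarrow> nat \<Rightarrow> nat \<Rightarrow> cpoly set" where
  "Hspace m k l = {P \<in> Pspace m k l. Delta_x m P = 0 \<and> Delta_u m P = 0
      \<and> du_dx m P = 0 \<and> x_du m P = 0}"

end

theory Submission
  imports Defs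
begin

text \<open>Let v_j = <u,d_x>^j P for P in H_(k,l). Commuting <u,d_x> past Delta_x, Delta_u and
  <d_u,d_x> shows that every v_j stays in the kernel of these three operators; by uniqueness of
  the Fischer decomposition (orthogonality for the Fischer inner product) v_j is then its own
  harmonic component, so S_u^j P = v_j. Since [<x,d_u>, <u,d_x>] = E_x - E_u and <x,d_u> P = 0,
  induction gives <x,d_u> v_(j+1) = (j+1)(k-l-j) v_j. The factor is nonzero unless j = k - l:
  going down from v_(k+1) = 0 (x-degree reasons) this forces v_(k-l+1) = 0, and going up from a
  nonzero P it keeps v_0, ..., v_(k-l) nonzero. A nonzero element of H_(k,l) is
  z_1^(k-l) (z_1 w_2 - z_2 w_1)^l, built from the isotropic forms z = x_1 + i x_2, ... .\<close>

section \<open>Monomials and the Weyl algebra relations\<close>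

abbreviation var_mono :: "nat + nat \<Rightarrow> mono" where
  "var_mono v \<equiv> Poly_Mapping.single v 1"

lemma lookup_add_single [simp]:
  "Poly_Mapping.lookup (\<alpha> + Poly_Mapping.single v n) w = Poly_Mapping.lookup \<alpha> w + (if v = w then n else 0)"
  by (simp add: lookup_add lookup_single when_def)

lemma lookup_diff_single [simp]:
  "Poly_Mapping.lookup (\<alpha> - Poly_Mapping.single v n) w = Poly_Mapping.lookup \<alpha> w - (if v = w then n else 0)"
  by (simp add: lookup_minus lookup_single when_def)

lemma add_var_mono_diff_cancel [simp]: "\<alpha> + var_mono v - var_mono v = (\<alpha> :: mono)"
  by (rule poly_mapping_eqI) simp

lemma diff_var_mono_add_cancel: "0 < Poly_Mapping.lookup \<alpha> v \<Longrightarrow> \<alpha> - var_mono v + var_mono v = (\<alpha> :: mono)"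
  by (rule poly_mapping_eqI) auto

lemma pderiv_var_commute: "pderiv_var v (pderiv_var w P) = pderiv_var w (pderiv_var v P)"
proof -
  have "\<alpha> + var_mono v + var_mono w = \<alpha> + var_mono w + var_mono v" for \<alpha>
    by (simp add: add_ac)
  then show ?thesis
    unfolding pderiv_var_def by (intro ext) (auto simp: algebra_simps)
qed

lemma mult_var_commute: "mult_var v (mult_var w P) = mult_var w (mult_var v P)"
proof -
  have "\<alpha> - var_mono v - var_mono w = \<alpha> - var_mono w - var_mono v" for \<alpha>
    by (intro poly_mapping_eqI) simp
  then show ?thesis
    unfolding mult_var_def by (intro ext) auto
qed

lemma pderiv_mult_var:
  "pderiv_var v (mult_var w P) = mult_var w (pderiv_var v P) + (if v = w then P else 0)"
proof (rule ext)
  fix \<alpha>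
  show "pderiv_var v (mult_var w P) \<alpha> = (mult_var w (pderiv_var v P) + (if v = w then P else 0)) \<alpha>"
  proof (cases "v = w")
    case True
    have "0 < Poly_Mapping.lookup \<alpha> w \<Longrightarrow> \<alpha> - var_mono w + var_mono w = \<alpha>"
      by (rule diff_var_mono_add_cancel)
    with True show ?thesis
      by (auto simp: pderiv_var_def mult_var_def algebra_simps)
  next
    case False
    then have "0 < Poly_Mapping.lookup \<alpha> w \<Longrightarrow> \<alpha> + var_mono v - var_mono w = \<alpha> - var_mono w + var_mono v"
      by (intro poly_mapping_eqI) auto
    with False show ?thesis by (auto simp: pderiv_var_def mult_var_def)
  qed
qed

lemma sum_fun_apply: "(\<Sum>j\<in>A. f j) x = (\<Sum>j\<in>A. f j x :: 'b :: comm_monoid_add)"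
  by (induction A rule: infinite_finite_induct) auto

definition smul :: "complex \<Rightarrow> cpoly \<Rightarrow> cpoly" where
  "smul c P = (\<lambda>\<alpha>. c * P \<alpha>)"

definition linear_op :: "(cpoly \<Rightarrow> cpoly) \<Rightarrow> bool" where
  "linear_op D \<longleftrightarrow> (\<forall>P Q. D (P + Q) = D P + D Q) \<and> (\<forall>c P. D (smul c P) = smul c (D P))"

lemma smul_0_left [simp]: "smul 0 P = 0"
  and smul_1 [simp]: "smul 1 P = P"
  and smul_0_right [simp]: "smul c 0 = 0"
  and smul_smul: "smul a (smul b P) = smul (a * b) P"
  and smul_add_left: "smul (a + b) P = smul a P + smul b P"
  and smul_diff_left: "smul (a - b) P = smul a P - smul b P"
  and smul_add_right: "smul c (P + Q) = smul c P + smul c Q"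
  and smul_neg_1: "smul (-1) P = - P"
  by (simp_all add: smul_def fun_eq_iff algebra_simps)

lemma smul_eq_0_iff: "smul c P = 0 \<longleftrightarrow> c = 0 \<or> P = 0"
  by (auto simp: smul_def fun_eq_iff)

lemma smul_sum_right: "smul c (\<Sum>i\<in>I. f i) = (\<Sum>i\<in>I. smul c (f i))"
  by (simp add: smul_def fun_eq_iff sum_fun_apply sum_distrib_left)

lemma smul_sum_left: "smul (\<Sum>i\<in>I. f i) P = (\<Sum>i\<in>I. smul (f i) P)"
  by (simp add: smul_def fun_eq_iff sum_fun_apply sum_distrib_right)

lemma linear_op_add: "linear_op D \<Longrightarrow> D (P + Q) = D P + D Q"
  and linear_op_smul: "linear_op D \<Longrightarrow> D (smul c P) = smul c (D P)"
  by (simp_all add: linear_op_def)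

lemma linear_op_zero: "linear_op D \<Longrightarrow> D 0 = 0"
  using linear_op_smul[of D 0 0] by simp

lemma linear_op_uminus: "linear_op D \<Longrightarrow> D (- P) = - D P"
  using linear_op_smul[of D "-1" P] by (simp add: smul_neg_1)

lemma linear_op_diff: "linear_op D \<Longrightarrow> D (P - Q) = D P - D Q"
  using linear_op_add[of D P "- Q"] linear_op_uminus[of D Q] by simp

lemma linear_op_sum: "linear_op D \<Longrightarrow> D (\<Sum>j\<in>A. f j) = (\<Sum>j\<in>A. D (f j))"
  by (induction A rule: infinite_finite_induct) (auto simp: linear_op_zero linear_op_add)

lemma linear_op_comp: "linear_op D \<Longrightarrow> linear_op E \<Longrightarrow> linear_op (\<lambda>P. D (E P))"
  unfolding linear_op_def by auto

lemma linear_op_sum_ops: "(\<And>j. j \<in> A \<Longrightarrow> linear_op (D j)) \<Longrightarrow> linear_op (\<lambda>P. \<Sum>j\<in>A. D j P)"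
  unfolding linear_op_def smul_def
  by (auto simp: fun_eq_iff sum_fun_apply sum.distrib sum_distrib_left)

lemma linear_op_funpow: "linear_op D \<Longrightarrow> linear_op (D ^^ n)"
  by (induction n) (auto simp: linear_op_def)

lemma linear_op_pderiv_var: "linear_op (pderiv_var v)"
  and linear_op_mult_var: "linear_op (mult_var v)"
  unfolding linear_op_def pderiv_var_def mult_var_def smul_def by (auto simp: fun_eq_iff algebra_simps)

lemma linear_op_Delta_x: "linear_op (Delta_x m)"
  and linear_op_Delta_u: "linear_op (Delta_u m)"
  and linear_op_x_du: "linear_op (x_du m)"
  and linear_op_u_dx: "linear_op (u_dx m)"
  and linear_op_normsq_x: "linear_op (normsq_x m)"
  and linear_op_normsq_u: "linear_op (normsq_u m)"
  unfolding Delta_x_def[abs_def] Delta_u_def[abs_def] x_du_def[abs_def]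
    u_dx_def[abs_def] normsq_x_def[abs_def] normsq_u_def[abs_def]
  by (rule linear_op_sum_ops, rule linear_op_comp,
      rule linear_op_pderiv_var linear_op_mult_var, rule linear_op_pderiv_var linear_op_mult_var)+

lemmas pderiv_var_add = linear_op_add[OF linear_op_pderiv_var]
lemmas pderiv_var_sum = linear_op_sum[OF linear_op_pderiv_var]
lemmas mult_var_add = linear_op_add[OF linear_op_mult_var]
lemmas mult_var_sum = linear_op_sum[OF linear_op_mult_var]

section \<open>Commutators with <u,d_x>\<close>

lemma pderiv_pderiv_mult_var:
  "pderiv_var a (pderiv_var b (mult_var w Q)) = mult_var w (pderiv_var a (pderiv_var b Q))
     + (if b = w then pderiv_var a Q else 0) + (if a = w then pderiv_var b Q else 0)"
  by (simp add: pderiv_mult_var pderiv_var_add linear_op_zero[OF linear_op_pderiv_var] add_ac)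

lemma second_order_u_dx:
  fixes a b :: "nat \<Rightarrow> nat + nat"
  shows "(\<Sum>i<m. pderiv_var (a i) (pderiv_var (b i) (u_dx m P))) =
     u_dx m (\<Sum>i<m. pderiv_var (a i) (pderiv_var (b i) P))
     + (\<Sum>i<m. \<Sum>j<m. (if b i = Inr j then pderiv_var (a i) (pderiv_var (Inl j) P) else 0)
                     + (if a i = Inr j then pderiv_var (b i) (pderiv_var (Inl j) P) else 0))"
    (is "_ = _ + (\<Sum>i<m. \<Sum>j<m. ?corr i j)")
proof -
  define main where
    "main i j = mult_var (Inr j) (pderiv_var (Inl j) (pderiv_var (a i) (pderiv_var (b i) P)))" for i j
  have summand: "pderiv_var (a i) (pderiv_var (b i) (mult_var (Inr j) (pderiv_var (Inl j) P)))
      = main i j + ?corr i j" for i j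
  proof -
    have "pderiv_var (a i) (pderiv_var (b i) (pderiv_var (Inl j) P))
        = pderiv_var (Inl j) (pderiv_var (a i) (pderiv_var (b i) P))"
      by (metis pderiv_var_commute)
    then show ?thesis unfolding pderiv_pderiv_mult_var main_def by (simp only: add.assoc)
  qed
  have "(\<Sum>i<m. pderiv_var (a i) (pderiv_var (b i) (u_dx m P))) = (\<Sum>i<m. \<Sum>j<m. main i j + ?corr i j)"
    unfolding u_dx_def pderiv_var_sum summand ..
  also have "\<dots> = (\<Sum>j<m. \<Sum>i<m. main i j) + (\<Sum>i<m. \<Sum>j<m. ?corr i j)"
    by (simp only: sum.distrib sum.swap[of main])
  also have "(\<Sum>j<m. \<Sum>i<m. main i j) = u_dx m (\<Sum>i<m. pderiv_var (a i) (pderiv_var (b i) P))"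
    unfolding u_dx_def main_def pderiv_var_sum mult_var_sum ..
  finally show ?thesis .
qed

lemma Delta_x_u_dx: "Delta_x m (u_dx m P) = u_dx m (Delta_x m P)"
  unfolding Delta_x_def
  using second_order_u_dx[where a="\<lambda>i. Inl i" and b="\<lambda>i. Inl i" and m=m and P=P] by simp

lemma Delta_u_u_dx: "Delta_u m (u_dx m P) = u_dx m (Delta_u m P) + du_dx m P + du_dx m P"
proof -
  have diagonal: "(\<Sum>i<m. \<Sum>j<m. (if Inr i = Inr j then g i j else 0) + (if Inr i = Inr j then g i j else 0))
      = (\<Sum>i<m. g i i) + (\<Sum>i<m. g i i)" for g :: "nat \<Rightarrow> nat \<Rightarrow> cpoly"
    by (simp only: sum.distrib sum.inject) simp
  show ?thesis
    unfolding Delta_u_def du_dx_def second_order_u_dx diagonal by (simp only: add.assoc)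
qed

lemma du_dx_u_dx: "du_dx m (u_dx m P) = u_dx m (du_dx m P) + Delta_x m P"
  unfolding Delta_x_def du_dx_def
  using second_order_u_dx[where a="\<lambda>i. Inr i" and b="\<lambda>i. Inl i" and m=m and P=P]
  by (simp add: pderiv_var_commute)

definition euler_x :: "nat \<Rightarrow> cpoly \<Rightarrow> cpoly" where
  "euler_x m P = (\<Sum>i<m. mult_var (Inl i) (pderiv_var (Inl i) P))"

definition euler_u :: "nat \<Rightarrow> cpoly \<Rightarrow> cpoly" where
  "euler_u m P = (\<Sum>i<m. mult_var (Inr i) (pderiv_var (Inr i) P))"

lemma mult_pderiv_mult_var:
  "mult_var c (pderiv_var d (mult_var w Q)) = mult_var c (mult_var w (pderiv_var d Q))
     + (if d = w then mult_var c Q else 0)"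
  by (simp add: pderiv_mult_var mult_var_add linear_op_zero[OF linear_op_mult_var])

lemma x_du_u_dx: "x_du m (u_dx m P) = u_dx m (x_du m P) + euler_x m P - euler_u m P"
proof -
  define T where "T = (\<Sum>i<m. \<Sum>j<m. mult_var (Inl i) (mult_var (Inr j) (pderiv_var (Inr i) (pderiv_var (Inl j) P))))"
  have diagonal: "(\<Sum>i<m. \<Sum>j<m. if v i = v j then g i j else 0) = (\<Sum>i<m. g i i)"
    if "inj v" for v :: "nat \<Rightarrow> nat + nat" and g :: "nat \<Rightarrow> nat \<Rightarrow> cpoly"
    using that by (simp add: inj_eq)
  have "x_du m (u_dx m P) = T + euler_x m P"
    unfolding x_du_def u_dx_def euler_x_def T_def pderiv_var_sum mult_var_sum mult_pderiv_mult_var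
    by (simp only: sum.distrib diagonal[OF inj_Inr])
  moreover have "T = (\<Sum>j<m. \<Sum>i<m. mult_var (Inr j) (mult_var (Inl i) (pderiv_var (Inl j) (pderiv_var (Inr i) P))))"
    unfolding T_def by (subst sum.swap, intro sum.cong refl) (metis mult_var_commute pderiv_var_commute)
  then have "u_dx m (x_du m P) = T + euler_u m P"
    unfolding x_du_def u_dx_def euler_u_def pderiv_var_sum mult_var_sum mult_pderiv_mult_var
    by (simp only: sum.distrib diagonal[OF inj_Inl])
  ultimately show ?thesis by simp
qed

section \<open>Bihomogeneous polynomials\<close>

lemma mult_pderiv_var_apply: "mult_var v (pderiv_var v P) \<alpha> = of_nat (Poly_Mapping.lookup \<alpha> v) * P \<alpha>"
proof (cases "Poly_Mapping.lookup \<alpha> v")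
  case (Suc n)
  then have "\<alpha> - var_mono v + var_mono v = \<alpha>" by (intro diff_var_mono_add_cancel) simp
  with Suc show ?thesis by (simp add: mult_var_def pderiv_var_def)
qed (simp add: mult_var_def)

lemma xdeg_add: "xdeg m (\<alpha> + \<beta>) = xdeg m \<alpha> + xdeg m \<beta>"
  and udeg_add: "udeg m (\<alpha> + \<beta>) = udeg m \<alpha> + udeg m \<beta>"
  by (simp_all add: xdeg_def udeg_def lookup_add sum.distrib)

lemma xdeg_single [simp]:
    "xdeg m (Poly_Mapping.single (Inl j) n) = (if j < m then n else 0)"
    "xdeg m (Poly_Mapping.single (Inr j) n) = 0"
  and udeg_single [simp]:
    "udeg m (Poly_Mapping.single (Inr j) n) = (if j < m then n else 0)"
    "udeg m (Poly_Mapping.single (Inl j) n) = 0"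
  by (simp_all add: xdeg_def udeg_def lookup_single when_def)

abbreviation vars :: "nat \<Rightarrow> (nat + nat) set" where
  "vars m \<equiv> Inl ` {..<m} \<union> Inr ` {..<m}"

definition fin_supp :: "cpoly \<Rightarrow> bool" where
  "fin_supp P \<longleftrightarrow> finite {\<alpha>. P \<alpha> \<noteq> 0}"

lemma fin_supp_zero: "fin_supp 0"
  by (simp add: fin_supp_def)

lemma fin_supp_add: "fin_supp P \<Longrightarrow> fin_supp Q \<Longrightarrow> fin_supp (P + Q)"
  unfolding fin_supp_def by (rule finite_subset[of _ "{\<alpha>. P \<alpha> \<noteq> 0} \<union> {\<alpha>. Q \<alpha> \<noteq> 0}"]) auto

lemma fin_supp_diff: "fin_supp P \<Longrightarrow> fin_supp Q \<Longrightarrow> fin_supp (P - Q)"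
  unfolding fin_supp_def by (rule finite_subset[of _ "{\<alpha>. P \<alpha> \<noteq> 0} \<union> {\<alpha>. Q \<alpha> \<noteq> 0}"]) auto

lemma fin_supp_smul: "fin_supp P \<Longrightarrow> fin_supp (smul c P)"
  unfolding fin_supp_def smul_def by (rule rev_finite_subset) auto

lemma fin_supp_sum: "(\<And>j. j \<in> A \<Longrightarrow> fin_supp (f j)) \<Longrightarrow> fin_supp (\<Sum>j\<in>A. f j)"
  by (induction A rule: infinite_finite_induct) (auto intro: fin_supp_add fin_supp_zero)

lemma mult_var_nonzero:
  assumes "mult_var v P \<alpha> \<noteq> 0"
  shows "\<exists>\<beta>. \<alpha> = \<beta> + var_mono v \<and> P \<beta> \<noteq> 0"
proof -
  from assms have "0 < Poly_Mapping.lookup \<alpha> v" "P (\<alpha> - var_mono v) \<noteq> 0"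
    by (auto simp: mult_var_def split: if_splits)
  then show ?thesis using diff_var_mono_add_cancel by metis
qed

lemma fin_supp_mult_var: "fin_supp P \<Longrightarrow> fin_supp (mult_var v P)"
  unfolding fin_supp_def
  by (rule finite_subset[of _ "(\<lambda>\<beta>. \<beta> + var_mono v) ` {\<beta>. P \<beta> \<noteq> 0}"])
    (auto dest: mult_var_nonzero)

lemma fin_supp_pderiv_var: "fin_supp P \<Longrightarrow> fin_supp (pderiv_var v P)"
  unfolding fin_supp_def
  by (rule finite_subset[of _ "(\<lambda>\<beta>. \<beta> - var_mono v) ` {\<beta>. P \<beta> \<noteq> 0}"])
    (auto simp: pderiv_var_def image_iff intro!: exI[of _ "_ + var_mono v"])

lemma Pspace_iff:
  "P \<in> Pspace m p q \<longleftrightarrow> fin_supp P \<and>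
     (\<forall>\<alpha>. P \<alpha> \<noteq> 0 \<longrightarrow> Poly_Mapping.keys \<alpha> \<subseteq> vars m \<and> xdeg m \<alpha> = p \<and> udeg m \<alpha> = q)"
  unfolding Pspace_def fin_supp_def by blast

lemma zero_in_Pspace: "0 \<in> Pspace m p q"
  by (simp add: Pspace_iff fin_supp_zero)

lemma add_in_Pspace: "P \<in> Pspace m p q \<Longrightarrow> Q \<in> Pspace m p q \<Longrightarrow> P + Q \<in> Pspace m p q"
  unfolding Pspace_iff by (metis add.right_neutral fin_supp_add plus_fun_apply)

lemma smul_in_Pspace: "P \<in> Pspace m p q \<Longrightarrow> smul c P \<in> Pspace m p q"
  unfolding Pspace_iff using fin_supp_smul by (auto simp: smul_def)

lemma sum_in_Pspace: "(\<And>j. j \<in> A \<Longrightarrow> f j \<in> Pspace m p q) \<Longrightarrow> (\<Sum>j\<in>A. f j) \<in> Pspace m p q"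
  by (induction A rule: infinite_finite_induct) (auto intro: add_in_Pspace zero_in_Pspace)

lemma mult_var_in_Pspace:
  assumes P: "P \<in> Pspace m p q" and v: "v \<in> vars m"
  shows "mult_var v P \<in> Pspace m (p + xdeg m (var_mono v)) (q + udeg m (var_mono v))"
proof -
  have "Poly_Mapping.keys \<alpha> \<subseteq> vars m \<and> xdeg m \<alpha> = p + xdeg m (var_mono v)
      \<and> udeg m \<alpha> = q + udeg m (var_mono v)" if nonzero: "mult_var v P \<alpha> \<noteq> 0" for \<alpha>
  proof -
    obtain \<beta> where \<alpha>: "\<alpha> = \<beta> + var_mono v" and "P \<beta> \<noteq> 0"
      using mult_var_nonzero[OF nonzero] by blast
    with P have "Poly_Mapping.keys \<beta> \<subseteq> vars m" "xdeg m \<beta> = p" "udeg m \<beta> = q"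
      by (auto simp: Pspace_iff)
    with v show ?thesis
      using keys_add[of \<beta> "var_mono v"] unfolding \<alpha> xdeg_add udeg_add by auto
  qed
  with P show ?thesis by (simp add: Pspace_iff fin_supp_mult_var)
qed

lemma pderiv_var_in_Pspace:
  assumes P: "P \<in> Pspace m p q"
  shows "pderiv_var v P \<in> Pspace m (p - xdeg m (var_mono v)) (q - udeg m (var_mono v))"
    and "p < xdeg m (var_mono v) \<Longrightarrow> pderiv_var v P = 0"
proof -
  have shape: "Poly_Mapping.keys \<alpha> \<subseteq> vars m \<and> xdeg m \<alpha> + xdeg m (var_mono v) = p
      \<and> udeg m \<alpha> + udeg m (var_mono v) = q" if "pderiv_var v P \<alpha> \<noteq> 0" for \<alpha>
  proof -
    from that have "P (\<alpha> + var_mono v) \<noteq> 0" by (simp add: pderiv_var_def)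
    with P have "Poly_Mapping.keys (\<alpha> + var_mono v) \<subseteq> vars m"
      "xdeg m (\<alpha> + var_mono v) = p" "udeg m (\<alpha> + var_mono v) = q"
      by (auto simp: Pspace_iff)
    moreover have "Poly_Mapping.keys \<alpha> \<subseteq> Poly_Mapping.keys (\<alpha> + var_mono v)"
      by (auto simp: in_keys_iff)
    ultimately show ?thesis by (auto simp: xdeg_add udeg_add)
  qed
  have "Poly_Mapping.keys \<alpha> \<subseteq> vars m \<and> xdeg m \<alpha> = p - xdeg m (var_mono v)
      \<and> udeg m \<alpha> = q - udeg m (var_mono v)" if "pderiv_var v P \<alpha> \<noteq> 0" for \<alpha>
    using shape[OF that] by auto
  with P show "pderiv_var v P \<in> Pspace m (p - xdeg m (var_mono v)) (q - udeg m (var_mono v))"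
    by (simp add: Pspace_iff fin_supp_pderiv_var)
  show "pderiv_var v P = 0" if "p < xdeg m (var_mono v)"
  proof (rule ext, rule ccontr)
    fix \<alpha> assume "pderiv_var v P \<alpha> \<noteq> 0 \<alpha>"
    with shape[of \<alpha>] that show False by simp
  qed
qed

lemma u_dx_in_Pspace:
  assumes "P \<in> Pspace m p q"
  shows "u_dx m P \<in> Pspace m (p - 1) (q + 1)"
  unfolding u_dx_def
proof (rule sum_in_Pspace)
  fix j assume j: "j \<in> {..<m}"
  then have "pderiv_var (Inl j) P \<in> Pspace m (p - 1) q"
    using pderiv_var_in_Pspace(1)[OF assms, of "Inl j"] by simp
  from mult_var_in_Pspace[OF this, of "Inr j"] j
  show "mult_var (Inr j) (pderiv_var (Inl j) P) \<in> Pspace m (p - 1) (q + 1)"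
    by simp
qed

lemma u_dx_Pspace_0:
  assumes "P \<in> Pspace m 0 q"
  shows "u_dx m P = 0"
proof -
  have "pderiv_var (Inl j) P = 0" if "j < m" for j
    using pderiv_var_in_Pspace(2)[OF assms, of "Inl j"] that by simp
  then show ?thesis
    unfolding u_dx_def by (simp add: linear_op_zero[OF linear_op_mult_var])
qed

lemma euler_x_Pspace: "P \<in> Pspace m p q \<Longrightarrow> euler_x m P = smul (of_nat p) P"
  and euler_u_Pspace: "P \<in> Pspace m p q \<Longrightarrow> euler_u m P = smul (of_nat q) P"
proof -
  assume P: "P \<in> Pspace m p q"
  have "euler_x m P \<alpha> = of_nat (xdeg m \<alpha>) * P \<alpha>" "euler_u m P \<alpha> = of_nat (udeg m \<alpha>) * P \<alpha>" for \<alpha>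
    unfolding euler_x_def euler_u_def xdeg_def udeg_def
    by (simp_all add: sum_fun_apply mult_pderiv_var_apply sum_distrib_right)
  moreover have "xdeg m \<alpha> = p" "udeg m \<alpha> = q" if "P \<alpha> \<noteq> 0" for \<alpha>
    using P that by (auto simp: Pspace_iff)
  ultimately show "euler_x m P = smul (of_nat p) P" "euler_u m P = smul (of_nat q) P"
    by (metis (no_types, lifting) mult_zero_right smul_def ext)+
qed

section \<open>The Fischer inner product and the harmonic component\<close>

definition mono_factorial :: "mono \<Rightarrow> nat" where
  "mono_factorial \<alpha> = (\<Prod>v\<in>Poly_Mapping.keys \<alpha>. fact (Poly_Mapping.lookup \<alpha> v))"

lemma mono_factorial_superset:
  "finite S \<Longrightarrow> Poly_Mapping.keys \<alpha> \<subseteq> S \<Longrightarrow> mono_factorial \<alpha> = (\<Prod>v\<in>S. fact (Poly_Mapping.lookup \<alpha> v))"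
  unfolding mono_factorial_def by (rule prod.mono_neutral_left) (auto simp: in_keys_iff)

lemma mono_factorial_add_var_mono:
  "mono_factorial (\<beta> + var_mono v) = mono_factorial \<beta> * (Poly_Mapping.lookup \<beta> v + 1)"
proof -
  define S where "S = insert v (Poly_Mapping.keys \<beta>)"
  have S: "finite S" "v \<in> S" "Poly_Mapping.keys \<beta> \<subseteq> S" "Poly_Mapping.keys (\<beta> + var_mono v) \<subseteq> S"
    unfolding S_def using keys_add[of \<beta> "var_mono v"] by auto
  have rest: "(\<Prod>u\<in>S - {v}. fact (Poly_Mapping.lookup (\<beta> + var_mono v) u))
      = (\<Prod>u\<in>S - {v}. fact (Poly_Mapping.lookup \<beta> u))"
    by (rule prod.cong) auto
  have "mono_factorial (\<beta> + var_mono v)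
      = fact (Poly_Mapping.lookup \<beta> v + 1) * (\<Prod>u\<in>S - {v}. fact (Poly_Mapping.lookup \<beta> u))"
    unfolding mono_factorial_superset[OF S(1,4)] prod.remove[OF S(1,2)] rest by simp
  also have "\<dots> = mono_factorial \<beta> * (Poly_Mapping.lookup \<beta> v + 1)"
    unfolding mono_factorial_superset[OF S(1,3)] prod.remove[OF S(1,2)] by (simp add: algebra_simps)
  finally show ?thesis .
qed

definition fischer :: "cpoly \<Rightarrow> cpoly \<Rightarrow> complex" where
  "fischer X Y = Sum_any (\<lambda>\<alpha>. of_nat (mono_factorial \<alpha>) * X \<alpha> * cnj (Y \<alpha>))"

lemma fischer_expand:
  "finite A \<Longrightarrow> {\<alpha>. X \<alpha> \<noteq> 0} \<subseteq> A \<Longrightarrow>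
     fischer X Y = (\<Sum>\<alpha>\<in>A. of_nat (mono_factorial \<alpha>) * X \<alpha> * cnj (Y \<alpha>))"
  unfolding fischer_def by (rule Sum_any.expand_superset) auto

lemma fischer_add_left: "fin_supp X \<Longrightarrow> fin_supp X' \<Longrightarrow> fischer (X + X') Y = fischer X Y + fischer X' Y"
proof -
  assume "fin_supp X" "fin_supp X'"
  then have A: "finite ({\<alpha>. X \<alpha> \<noteq> 0} \<union> {\<alpha>. X' \<alpha> \<noteq> 0})" by (simp add: fin_supp_def)
  have "{\<alpha>. (X + X') \<alpha> \<noteq> 0} \<subseteq> {\<alpha>. X \<alpha> \<noteq> 0} \<union> {\<alpha>. X' \<alpha> \<noteq> 0}" by auto
  then show ?thesis
    using fischer_expand[OF A, of X Y] fischer_expand[OF A, of X' Y] fischer_expand[OF A, of "X + X'" Y]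
    by (simp add: algebra_simps sum.distrib)
qed

lemma fischer_add_right: "fin_supp X \<Longrightarrow> fischer X (Y + Y') = fischer X Y + fischer X Y'"
proof -
  assume "fin_supp X"
  then have A: "finite {\<alpha>. X \<alpha> \<noteq> 0}" by (simp add: fin_supp_def)
  show ?thesis
    using fischer_expand[OF A, of X "Y + Y'"] fischer_expand[OF A, of X Y] fischer_expand[OF A, of X Y']
    by (simp add: algebra_simps sum.distrib)
qed

lemma fischer_zero_left [simp]: "fischer 0 Y = 0"
  and fischer_zero_right [simp]: "fischer X 0 = 0"
  by (simp_all add: fischer_def)

lemma fischer_diff_left: "fin_supp X \<Longrightarrow> fin_supp X' \<Longrightarrow> fischer (X - X') Y = fischer X Y - fischer X' Y"
  using fischer_add_left[of "X - X'" X' Y] fin_supp_diff by simp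

lemma fischer_sum_left:
  "(\<And>j. j \<in> I \<Longrightarrow> fin_supp (f j)) \<Longrightarrow> fischer (\<Sum>j\<in>I. f j) Y = (\<Sum>j\<in>I. fischer (f j) Y)"
  by (induction I rule: infinite_finite_induct) (auto simp: fischer_add_left fin_supp_sum)

lemma fischer_sum_right: "fin_supp X \<Longrightarrow> fischer X (\<Sum>j\<in>I. f j) = (\<Sum>j\<in>I. fischer X (f j))"
  by (induction I rule: infinite_finite_induct) (auto simp: fischer_add_right)

lemma fischer_mult_var: "fin_supp X \<Longrightarrow> fischer (mult_var v X) Y = fischer X (pderiv_var v Y)"
proof -
  assume X: "fin_supp X"
  define A where "A = {\<alpha>. X \<alpha> \<noteq> 0}"
  have A: "finite A" using X by (simp add: A_def fin_supp_def)
  have shift: "inj_on (\<lambda>\<beta>. \<beta> + var_mono v) A"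
    by (rule inj_onI) simp
  have "{\<alpha>. mult_var v X \<alpha> \<noteq> 0} \<subseteq> (\<lambda>\<beta>. \<beta> + var_mono v) ` A"
    unfolding A_def by (auto dest: mult_var_nonzero)
  then have "fischer (mult_var v X) Y = (\<Sum>\<alpha>\<in>(\<lambda>\<beta>. \<beta> + var_mono v) ` A.
      of_nat (mono_factorial \<alpha>) * mult_var v X \<alpha> * cnj (Y \<alpha>))"
    using A by (intro fischer_expand) auto
  also have "\<dots> = (\<Sum>\<beta>\<in>A. of_nat (mono_factorial (\<beta> + var_mono v))
      * mult_var v X (\<beta> + var_mono v) * cnj (Y (\<beta> + var_mono v)))"
    unfolding sum.reindex[OF shift] comp_def ..
  also have "\<dots> = (\<Sum>\<beta>\<in>A. of_nat (mono_factorial \<beta>) * X \<beta> * cnj (pderiv_var v Y \<beta>))"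
    unfolding mono_factorial_add_var_mono by (simp add: mult_var_def pderiv_var_def algebra_simps)
  also have "\<dots> = fischer X (pderiv_var v Y)"
    using A by (simp add: fischer_expand A_def)
  finally show ?thesis .
qed

lemma fischer_normsq_x: "fin_supp X \<Longrightarrow> fischer (normsq_x m X) Y = fischer X (Delta_x m Y)"
  and fischer_normsq_u: "fin_supp X \<Longrightarrow> fischer (normsq_u m X) Y = fischer X (Delta_u m Y)"
  unfolding normsq_x_def normsq_u_def Delta_x_def Delta_u_def
  by (simp_all add: fischer_sum_left fischer_sum_right fischer_mult_var fin_supp_mult_var)

lemma fischer_self_eq_0: "fin_supp R \<Longrightarrow> fischer R R = 0 \<Longrightarrow> R = 0"
proof -
  assume R: "fin_supp R" and zero: "fischer R R = 0"
  define A where "A = {\<alpha>. R \<alpha> \<noteq> 0}"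
  have A: "finite A" using R by (simp add: A_def fin_supp_def)
  have "fischer R R = (\<Sum>\<alpha>\<in>A. of_nat (mono_factorial \<alpha>) * (R \<alpha> * cnj (R \<alpha>)))"
    using fischer_expand[OF A, of R R] by (simp add: A_def mult.assoc)
  also have "\<dots> = of_real (\<Sum>\<alpha>\<in>A. real (mono_factorial \<alpha>) * (cmod (R \<alpha>))\<^sup>2)"
    unfolding of_real_sum of_real_mult complex_norm_square by simp
  finally have "(\<Sum>\<alpha>\<in>A. real (mono_factorial \<alpha>) * (cmod (R \<alpha>))\<^sup>2) = 0"
    using zero by (metis of_real_eq_0_iff)
  moreover have "mono_factorial \<alpha> \<noteq> 0" for \<alpha>
    by (simp add: mono_factorial_def)
  ultimately have "\<forall>\<alpha>\<in>A. R \<alpha> = 0"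
    using A by (simp add: sum_nonneg_eq_0_iff)
  then show "R = 0" by (auto simp: A_def)
qed

lemma fin_supp_normsq_pow: "fin_supp X \<Longrightarrow> fin_supp ((normsq_x m ^^ a) ((normsq_u m ^^ b) X))"
proof -
  have "fin_supp (normsq_x m Y)" "fin_supp (normsq_u m Y)" if "fin_supp Y" for Y
    unfolding normsq_x_def normsq_u_def using that by (simp_all add: fin_supp_sum fin_supp_mult_var)
  then show "fin_supp X \<Longrightarrow> fin_supp ((normsq_x m ^^ a) ((normsq_u m ^^ b) X))"
    by (induction a) (simp_all, induction b, simp_all)
qed

lemma fischer_normsq_pow_harmonic:
  assumes "fin_supp X" "Delta_x m R = 0" "Delta_u m R = 0" "(a, b) \<noteq> (0, 0)"
  shows "fischer ((normsq_x m ^^ a) ((normsq_u m ^^ b) X)) R = 0"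
proof (cases a)
  case (Suc a')
  then show ?thesis
    using fischer_normsq_x[OF fin_supp_normsq_pow[OF assms(1), of a' m b]] assms(2)
    by simp
next
  case 0
  with assms(4) obtain b' where "b = Suc b'" by (cases b) auto
  with 0 show ?thesis
    using fischer_normsq_u[OF fin_supp_normsq_pow[OF assms(1), of 0 m b']] assms(3)
    by simp
qed

lemma double_sum_eq_corner:
  assumes "\<And>a b. a \<le> A \<Longrightarrow> b \<le> B \<Longrightarrow> (a, b) \<noteq> (0, 0) \<Longrightarrow> f a b = 0"
  shows "(\<Sum>a\<le>(A::nat). \<Sum>b\<le>(B::nat). f a b) = (f 0 0 :: 'c::comm_monoid_add)"
proof -
  have "(\<Sum>b\<le>B. f a b) = (if a = 0 then f 0 0 else 0)" if "a \<le> A" for a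
    using assms that by (simp add: sum.neutral sum.remove[of "{..B}" 0])
  then show ?thesis by (simp add: sum.remove[of "{..A}" 0] sum.neutral)
qed

text \<open>A harmonic R is Fischer-orthogonal to everything divisible by |x|^2 or |u|^2, so
  R = H - Hs 0 0 is orthogonal to itself.\<close>

lemma harmonic_component_unique:
  assumes H: "fin_supp H" "Delta_x m H = 0" "Delta_u m H = 0"
    and Hs: "\<And>a b. a \<le> A \<Longrightarrow> b \<le> B \<Longrightarrow> fin_supp (Hs a b)"
      "Delta_x m (Hs 0 0) = 0" "Delta_u m (Hs 0 0) = 0"
    and decomp: "H = (\<Sum>a\<le>A. \<Sum>b\<le>B. (normsq_x m ^^ a) ((normsq_u m ^^ b) (Hs a b)))"
  shows "Hs 0 0 = H"
proof -
  define T where "T a b = (normsq_x m ^^ a) ((normsq_u m ^^ b) (Hs a b))" for a b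
  define R where "R = H - Hs 0 0"
  have Hs00: "fin_supp (Hs 0 0)" using Hs(1) by simp
  have T: "fin_supp (T a b)" if "a \<le> A" "b \<le> B" for a b
    unfolding T_def using Hs(1)[OF that] by (rule fin_supp_normsq_pow)
  have R: "fin_supp R" "Delta_x m R = 0" "Delta_u m R = 0"
    unfolding R_def using H Hs00 Hs(2,3)
    by (simp_all add: fin_supp_diff linear_op_diff[OF linear_op_Delta_x] linear_op_diff[OF linear_op_Delta_u])
  have "fischer H R = (\<Sum>a\<le>A. fischer (\<Sum>b\<le>B. T a b) R)"
    unfolding decomp T_def[symmetric] using T by (intro fischer_sum_left fin_supp_sum) auto
  also have "\<dots> = (\<Sum>a\<le>A. \<Sum>b\<le>B. fischer (T a b) R)"
    using T by (intro sum.cong refl fischer_sum_left) auto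
  also have "\<dots> = fischer (Hs 0 0) R"
    by (subst double_sum_eq_corner) (use fischer_normsq_pow_harmonic[OF Hs(1) R(2,3)] T_def in auto)
  finally have "fischer R R = 0"
    using fischer_diff_left[OF H(1) Hs00, of R] by (simp add: R_def)
  then show ?thesis
    using fischer_self_eq_0[OF R(1)] by (simp add: R_def)
qed

lemma pi_s_harmonic:
  assumes "H \<in> Pspace m p q" "Delta_x m H = 0" "Delta_u m H = 0"
  shows "pi_s m p q H = H"
  unfolding pi_s_def
proof (rule the_equality)
  define Hs0 :: "nat \<Rightarrow> nat \<Rightarrow> cpoly" where "Hs0 a b = (if a = 0 \<and> b = 0 then H else 0)" for a b
  have "(normsq_x m ^^ a) ((normsq_u m ^^ b) 0) = 0" for a b
    by (simp add: linear_op_zero[OF linear_op_funpow[OF linear_op_normsq_x]]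
        linear_op_zero[OF linear_op_funpow[OF linear_op_normsq_u]])
  then have "H = (\<Sum>a\<le>p div 2. \<Sum>b\<le>q div 2. (normsq_x m ^^ a) ((normsq_u m ^^ b) (Hs0 a b)))"
    by (subst double_sum_eq_corner) (auto simp: Hs0_def)
  moreover have "Hs0 a b \<in> Pspace m (p - 2*a) (q - 2*b) \<and> Delta_x m (Hs0 a b) = 0 \<and> Delta_u m (Hs0 a b) = 0"
    for a b
    using assms by (simp add: Hs0_def zero_in_Pspace linear_op_zero[OF linear_op_Delta_x]
        linear_op_zero[OF linear_op_Delta_u])
  ultimately show "\<exists>Hs. (\<forall>a \<le> p div 2. \<forall>b \<le> q div 2. Hs a b \<in> Pspace m (p - 2*a) (q - 2*b)
          \<and> Delta_x m (Hs a b) = 0 \<and> Delta_u m (Hs a b) = 0)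
      \<and> H = (\<Sum>a\<le>p div 2. \<Sum>b\<le>q div 2. (normsq_x m ^^ a) ((normsq_u m ^^ b) (Hs a b)))
      \<and> H = Hs 0 0"
    by (intro exI[of _ Hs0]) (simp add: Hs0_def)
next
  fix H' assume "\<exists>Hs. (\<forall>a \<le> p div 2. \<forall>b \<le> q div 2. Hs a b \<in> Pspace m (p - 2*a) (q - 2*b)
          \<and> Delta_x m (Hs a b) = 0 \<and> Delta_u m (Hs a b) = 0)
      \<and> H = (\<Sum>a\<le>p div 2. \<Sum>b\<le>q div 2. (normsq_x m ^^ a) ((normsq_u m ^^ b) (Hs a b)))
      \<and> H' = Hs 0 0"
  then obtain Hs where Hs: "\<forall>a \<le> p div 2. \<forall>b \<le> q div 2. Hs a b \<in> Pspace m (p - 2*a) (q - 2*b)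
          \<and> Delta_x m (Hs a b) = 0 \<and> Delta_u m (Hs a b) = 0"
    and decomp: "H = (\<Sum>a\<le>p div 2. \<Sum>b\<le>q div 2. (normsq_x m ^^ a) ((normsq_u m ^^ b) (Hs a b)))"
    and H': "H' = Hs 0 0" by blast
  show "H' = H"
    unfolding H' using assms Hs decomp
    by (intro harmonic_component_unique[of H m "p div 2" "q div 2" Hs]) (auto simp: Pspace_iff)
qed

section \<open>The <u,d_x>-string of an element of H_(k,l)\<close>

lemma u_dx_preserves_kernel:
  assumes "Delta_x m Q = 0" "Delta_u m Q = 0" "du_dx m Q = 0"
  shows "Delta_x m (u_dx m Q) = 0" "Delta_u m (u_dx m Q) = 0" "du_dx m (u_dx m Q) = 0"
  using assms by (simp_all add: Delta_x_u_dx Delta_u_u_dx du_dx_u_dx linear_op_zero[OF linear_op_u_dx])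

lemma u_dx_pow_in_kernel:
  assumes "P \<in> Pspace m k l" "Delta_x m P = 0" "Delta_u m P = 0" "du_dx m P = 0"
  shows "(u_dx m ^^ j) P \<in> Pspace m (k - j) (l + j) \<and> Delta_x m ((u_dx m ^^ j) P) = 0
    \<and> Delta_u m ((u_dx m ^^ j) P) = 0 \<and> du_dx m ((u_dx m ^^ j) P) = 0"
proof (induction j)
  case (Suc j)
  then have Q: "(u_dx m ^^ j) P \<in> Pspace m (k - j) (l + j)" "Delta_x m ((u_dx m ^^ j) P) = 0"
      "Delta_u m ((u_dx m ^^ j) P) = 0" "du_dx m ((u_dx m ^^ j) P) = 0"
    by blast+
  have "u_dx m ((u_dx m ^^ j) P) \<in> Pspace m (k - Suc j) (l + Suc j)"
    using u_dx_in_Pspace[OF Q(1)] by simp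
  with u_dx_preserves_kernel[OF Q(2-4)] show ?case
    by simp
qed (use assms in simp)

lemma S_u_pow_eq_u_dx_pow:
  assumes "P \<in> Pspace m k l" "Delta_x m P = 0" "Delta_u m P = 0" "du_dx m P = 0"
  shows "S_u_pow m j k l P = (u_dx m ^^ j) P"
proof (induction j)
  case (Suc j)
  have "u_dx m ((u_dx m ^^ j) P) \<in> Pspace m (k - j - 1) (l + j + 1)"
    using u_dx_in_Pspace u_dx_pow_in_kernel[OF assms, of j] by blast
  moreover have "Delta_x m (u_dx m ((u_dx m ^^ j) P)) = 0" "Delta_u m (u_dx m ((u_dx m ^^ j) P)) = 0"
    using u_dx_pow_in_kernel[OF assms, of "Suc j"] by simp_all
  ultimately show ?case
    by (simp add: Suc S_u_def pi_s_harmonic)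
qed simp

lemma Hspace_iff:
  "P \<in> Hspace m k l \<longleftrightarrow> P \<in> Pspace m k l \<and> Delta_x m P = 0 \<and> Delta_u m P = 0 \<and> du_dx m P = 0
     \<and> x_du m P = 0"
  by (simp add: Hspace_def)

lemma x_du_u_dx_pow:
  assumes P: "P \<in> Hspace m k l" and "j \<le> k"
  shows "x_du m ((u_dx m ^^ Suc j) P) = smul (of_int ((int j + 1) * (int k - int l - int j))) ((u_dx m ^^ j) P)"
  using \<open>j \<le> k\<close>
proof (induction j)
  case 0
  have "P \<in> Pspace m k l" "x_du m P = 0" using P by (simp_all add: Hspace_iff)
  then show ?case
    by (simp add: x_du_u_dx euler_x_Pspace euler_u_Pspace linear_op_zero[OF linear_op_u_dx]
        flip: smul_diff_left)
next
  case (Suc j)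
  have "P \<in> Pspace m k l" "Delta_x m P = 0" "Delta_u m P = 0" "du_dx m P = 0"
    using P by (simp_all add: Hspace_iff)
  then have "(u_dx m ^^ Suc j) P \<in> Pspace m (k - Suc j) (l + Suc j)"
    using u_dx_pow_in_kernel by blast
  with Suc.prems have euler:
      "euler_x m ((u_dx m ^^ Suc j) P) = smul (of_int (int k - int j - 1)) ((u_dx m ^^ Suc j) P)"
      "euler_u m ((u_dx m ^^ Suc j) P) = smul (of_int (int l + int j + 1)) ((u_dx m ^^ Suc j) P)"
    by (simp_all add: euler_x_Pspace euler_u_Pspace of_nat_diff algebra_simps)
  have step: "(u_dx m ^^ Suc j) P = u_dx m ((u_dx m ^^ j) P)" for j
    by simp
  have "x_du m ((u_dx m ^^ Suc (Suc j)) P) = u_dx m (x_du m ((u_dx m ^^ Suc j) P))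
      + euler_x m ((u_dx m ^^ Suc j) P) - euler_u m ((u_dx m ^^ Suc j) P)"
    unfolding step[of "Suc j"] by (rule x_du_u_dx)
  also have "\<dots> = smul (of_int ((int j + 1) * (int k - int l - int j)) + of_int (int k - int j - 1)
          - of_int (int l + int j + 1)) ((u_dx m ^^ Suc j) P)"
    using Suc.IH[OF Suc_leD[OF Suc.prems]]
    by (simp only: euler linear_op_smul[OF linear_op_u_dx] smul_add_left smul_diff_left step[symmetric])
  finally show ?case
    by (simp add: algebra_simps)
qed

lemma u_dx_pow_eq_0_descends:
  assumes "P \<in> Hspace m k l" "j \<le> k" "j + l \<noteq> k" "(u_dx m ^^ Suc j) P = 0"
  shows "(u_dx m ^^ j) P = 0"
proof -
  have "(of_int ((int j + 1) * (int k - int l - int j)) :: complex) \<noteq> 0"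
    using assms(3) by (simp only: of_int_eq_0_iff) auto
  moreover have "smul (of_int ((int j + 1) * (int k - int l - int j))) ((u_dx m ^^ j) P) = 0"
    using x_du_u_dx_pow[OF assms(1,2)] assms(4) by (simp add: linear_op_zero[OF linear_op_x_du])
  ultimately show ?thesis
    by (simp only: smul_eq_0_iff) blast
qed

lemma u_dx_pow_vanishes:
  assumes P: "P \<in> Hspace m k l" and "l \<le> k"
  shows "(u_dx m ^^ (k - l + 1)) P = 0"
proof -
  have "(u_dx m ^^ (k + 1 - i)) P = 0" if "i \<le> l" for i
    using that
  proof (induction i)
    case 0
    have "P \<in> Pspace m k l" "Delta_x m P = 0" "Delta_u m P = 0" "du_dx m P = 0"
      using P by (simp_all add: Hspace_iff)
    then have "(u_dx m ^^ k) P \<in> Pspace m 0 (l + k)"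
      using u_dx_pow_in_kernel[of P m k l k] by simp
    then show ?case by (simp add: u_dx_Pspace_0)
  next
    case (Suc i)
    have "Suc (k - i) = k + 1 - i" using Suc.prems \<open>l \<le> k\<close> by simp
    then have "(u_dx m ^^ Suc (k - i)) P = 0"
      using Suc.IH Suc.prems by (metis Suc_leD)
    then have "(u_dx m ^^ (k - i)) P = 0"
      by (rule u_dx_pow_eq_0_descends[OF P, rotated 2]) (use Suc.prems \<open>l \<le> k\<close> in auto)
    then show ?case by simp
  qed
  from this[of l] show ?thesis
    using \<open>l \<le> k\<close> by (simp add: Suc_diff_le)
qed

lemma u_dx_pow_nonzero:
  assumes P: "P \<in> Hspace m k l" "P \<noteq> 0" and "j \<le> k - l"
  shows "(u_dx m ^^ j) P \<noteq> 0"
  using \<open>j \<le> k - l\<close>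
proof (induction j)
  case (Suc j)
  then have "j \<le> k" "j + l \<noteq> k" "(u_dx m ^^ j) P \<noteq> 0" by auto
  then show ?case
    using u_dx_pow_eq_0_descends[OF P(1)] by blast
qed (use P in simp)

section \<open>A nonzero element of H_(k,l)\<close>

definition mult_iso :: "nat + nat \<Rightarrow> nat + nat \<Rightarrow> cpoly \<Rightarrow> cpoly" where
  "mult_iso v1 v2 F = mult_var v1 F + smul \<i> (mult_var v2 F)"

definition iso_coeff :: "nat + nat \<Rightarrow> nat + nat \<Rightarrow> nat + nat \<Rightarrow> complex" where
  "iso_coeff v1 v2 w = (if w = v1 then 1 else if w = v2 then \<i> else 0)"

lemma linear_op_mult_iso: "linear_op (mult_iso v1 v2)"
  unfolding linear_op_def mult_iso_def
  by (simp add: mult_var_add linear_op_smul[OF linear_op_mult_var] smul_add_right smul_smul mult.commute)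

lemma pderiv_mult_iso:
  "v1 \<noteq> v2 \<Longrightarrow> pderiv_var w (mult_iso v1 v2 F) = mult_iso v1 v2 (pderiv_var w F) + smul (iso_coeff v1 v2 w) F"
  unfolding mult_iso_def iso_coeff_def
  by (auto simp: pderiv_var_add linear_op_smul[OF linear_op_pderiv_var] pderiv_mult_var smul_add_right add_ac)

lemma mult_iso_commute: "mult_iso a b (mult_iso c d F) = mult_iso c d (mult_iso a b F)"
  unfolding mult_iso_def
  by (simp add: mult_var_add linear_op_smul[OF linear_op_mult_var] smul_add_right smul_smul
      mult_var_commute add_ac mult.commute)

lemma x_du_mult_iso:
  assumes "v1 \<noteq> v2"
  shows "x_du m (mult_iso v1 v2 F) = mult_iso v1 v2 (x_du m F) + (\<Sum>j<m. smul (iso_coeff v1 v2 (Inr j)) (mult_var (Inl j) F))"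
proof -
  have commute: "mult_var (Inl j) (mult_iso v1 v2 G) = mult_iso v1 v2 (mult_var (Inl j) G)" for j G
    unfolding mult_iso_def mult_var_add linear_op_smul[OF linear_op_mult_var] mult_var_commute[of "Inl j"] ..
  have "x_du m (mult_iso v1 v2 F) = (\<Sum>j<m. mult_var (Inl j) (mult_iso v1 v2 (pderiv_var (Inr j) F))
      + mult_var (Inl j) (smul (iso_coeff v1 v2 (Inr j)) F))"
    unfolding x_du_def pderiv_mult_iso[OF assms] mult_var_add ..
  also have "\<dots> = (\<Sum>j<m. mult_iso v1 v2 (mult_var (Inl j) (pderiv_var (Inr j) F)))
      + (\<Sum>j<m. smul (iso_coeff v1 v2 (Inr j)) (mult_var (Inl j) F))"
    unfolding sum.distrib commute linear_op_smul[OF linear_op_mult_var] ..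
  also have "\<dots> = mult_iso v1 v2 (x_du m F) + (\<Sum>j<m. smul (iso_coeff v1 v2 (Inr j)) (mult_var (Inl j) F))"
    unfolding x_du_def linear_op_sum[OF linear_op_mult_iso] ..
  finally show ?thesis .
qed

text \<open>The isotropic linear forms z_1 = x_1 + i x_2, z_2 = x_3 + i x_4, w_1 = u_1 + i u_2 and
  w_2 = u_3 + i u_4 (variables numbered from 0), indexed by i < 4.\<close>

definition iso_var1 :: "nat \<Rightarrow> nat + nat" where
  "iso_var1 i = [Inl 0, Inl 2, Inr 0, Inr 2] ! i"

definition iso_var2 :: "nat \<Rightarrow> nat + nat" where
  "iso_var2 i = [Inl 1, Inl 3, Inr 1, Inr 3] ! i"

definition iso_form :: "nat \<Rightarrow> cpoly \<Rightarrow> cpoly" where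
  "iso_form i = mult_iso (iso_var1 i) (iso_var2 i)"

abbreviation iso_form_coeff :: "nat \<Rightarrow> nat + nat \<Rightarrow> complex" where
  "iso_form_coeff i \<equiv> iso_coeff (iso_var1 i) (iso_var2 i)"

lemma less_4_cases: "(i::nat) < 4 \<Longrightarrow> i = 0 \<or> i = 1 \<or> i = 2 \<or> i = 3"
  by auto

lemma iso_var_simps [simp]:
  "iso_var1 0 = Inl 0" "iso_var1 (Suc 0) = Inl 2" "iso_var1 2 = Inr 0" "iso_var1 3 = Inr 2"
  "iso_var2 0 = Inl 1" "iso_var2 (Suc 0) = Inl 3" "iso_var2 2 = Inr 1" "iso_var2 3 = Inr 3"
  by (simp_all add: iso_var1_def iso_var2_def numeral_eq_Suc)

lemma iso_var1_ne_iso_var2: "i < 4 \<Longrightarrow> iso_var1 i \<noteq> iso_var2 i"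
  by (auto dest: less_4_cases)

definition poly_one :: cpoly where
  "poly_one = (\<lambda>\<alpha>. if \<alpha> = 0 then 1 else 0)"

lemma pderiv_var_poly_one: "pderiv_var w poly_one = 0"
proof -
  have "Poly_Mapping.lookup (\<alpha> + var_mono w) w \<noteq> 0" for \<alpha>
    by simp
  then have "\<alpha> + var_mono w \<noteq> 0" for \<alpha>
    by (metis lookup_zero)
  then show ?thesis by (simp add: pderiv_var_def poly_one_def fun_eq_iff)
qed

inductive_set iso_span :: "cpoly set" where
  poly_one: "poly_one \<in> iso_span"
| add: "F \<in> iso_span \<Longrightarrow> G \<in> iso_span \<Longrightarrow> F + G \<in> iso_span"
| smul: "F \<in> iso_span \<Longrightarrow> smul c F \<in> iso_span"
| iso_form: "F \<in> iso_span \<Longrightarrow> i < 4 \<Longrightarrow> iso_form i F \<in> iso_span"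

lemma iso_span_zero: "0 \<in> iso_span"
  using iso_span.smul[OF iso_span.poly_one, of 0] by simp

lemma iso_span_pderiv_var:
  assumes "F \<in> iso_span"
  obtains G where "\<And>i. i < 4 \<Longrightarrow> G i \<in> iso_span"
    "\<And>w. pderiv_var w F = (\<Sum>i<4. smul (iso_form_coeff i w) (G i))"
proof -
  have "\<exists>G. (\<forall>i<4. G i \<in> iso_span) \<and> (\<forall>w. pderiv_var w F = (\<Sum>i<4. smul (iso_form_coeff i w) (G i)))"
    using assms
  proof (induction rule: iso_span.induct)
    case poly_one
    define Z :: "nat \<Rightarrow> cpoly" where "Z i = 0" for i
    have "pderiv_var w poly_one = (\<Sum>i<4. smul (iso_form_coeff i w) (Z i))" for w
      by (simp add: Z_def pderiv_var_poly_one)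
    moreover have "\<forall>i<4. Z i \<in> iso_span"
      by (simp add: Z_def iso_span_zero)
    ultimately show ?case
      by blast
  next
    case (add F F')
    then obtain G G' where G:
      "\<forall>i<4. G i \<in> iso_span" "\<forall>w. pderiv_var w F = (\<Sum>i<4. smul (iso_form_coeff i w) (G i))"
      "\<forall>i<4. G' i \<in> iso_span" "\<forall>w. pderiv_var w F' = (\<Sum>i<4. smul (iso_form_coeff i w) (G' i))"
      by blast
    have "\<forall>i<4. G i + G' i \<in> iso_span"
      using G by (blast intro: iso_span.add)
    moreover have "pderiv_var w (F + F') = (\<Sum>i<4. smul (iso_form_coeff i w) (G i + G' i))" for w
      unfolding pderiv_var_add smul_add_right sum.distrib G(2,4)[rule_format] ..
    ultimately show ?case
      by (intro exI[of _ "\<lambda>i. G i + G' i"]) blast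
  next
    case (smul F c)
    then obtain G where G:
      "\<forall>i<4. G i \<in> iso_span" "\<forall>w. pderiv_var w F = (\<Sum>i<4. smul (iso_form_coeff i w) (G i))"
      by blast
    have "\<forall>i<4. smul c (G i) \<in> iso_span"
      using G by (blast intro: iso_span.smul)
    moreover have "pderiv_var w (smul c F) = (\<Sum>i<4. smul (iso_form_coeff i w) (smul c (G i)))" for w
      unfolding linear_op_smul[OF linear_op_pderiv_var] G(2)[rule_format] smul_sum_right smul_smul
      by (simp only: mult.commute)
    ultimately show ?case
      by (intro exI[of _ "\<lambda>i. smul c (G i)"]) blast
  next
    case (iso_form F i0)
    then obtain G where G:
      "\<forall>i<4. G i \<in> iso_span" "\<forall>w. pderiv_var w F = (\<Sum>i<4. smul (iso_form_coeff i w) (G i))"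
      by blast
    define G' where "G' i = iso_form i0 (G i) + (if i = i0 then F else 0)" for i
    have "\<forall>i<4. G' i \<in> iso_span"
      using G(1) iso_form by (auto simp: G'_def intro: iso_span.add iso_span.iso_form iso_span_zero)
    moreover have "pderiv_var w (iso_form i0 F) = (\<Sum>i<4. smul (iso_form_coeff i w) (G' i))" for w
    proof -
      have "(\<Sum>i<4. smul (iso_form_coeff i w) (if i = i0 then F else 0)) = smul (iso_form_coeff i0 w) F"
        using iso_form.hyps(2) by (simp add: if_distrib[of "smul _"] cong: if_cong)
      then show ?thesis
        using iso_var1_ne_iso_var2[OF iso_form.hyps(2)] G(2)
        by (simp add: iso_form_def G'_def pderiv_mult_iso smul_add_right sum.distrib
            linear_op_sum[OF linear_op_mult_iso] linear_op_smul[OF linear_op_mult_iso])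
    qed
    ultimately show ?case by blast
  qed
  then show ?thesis using that by blast
qed

lemma iso_span_second_order_zero:
  assumes "F \<in> iso_span"
    and isotropic: "\<And>i i'. i < 4 \<Longrightarrow> i' < 4 \<Longrightarrow> (\<Sum>j\<in>J. iso_form_coeff i (b j) * iso_form_coeff i' (a j)) = 0"
  shows "(\<Sum>j\<in>J. pderiv_var (a j) (pderiv_var (b j) F)) = 0"
proof -
  obtain G where G: "\<And>i. i < 4 \<Longrightarrow> G i \<in> iso_span"
    "\<And>w. pderiv_var w F = (\<Sum>i<4. smul (iso_form_coeff i w) (G i))"
    using iso_span_pderiv_var[OF assms(1)] by blast
  define K where "K i = (SOME K. \<forall>w. pderiv_var w (G i) = (\<Sum>i'<4. smul (iso_form_coeff i' w) (K i')))"
    for i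
  have K: "pderiv_var w (G i) = (\<Sum>i'<4. smul (iso_form_coeff i' w) (K i i'))" if i: "i < 4" for i w
  proof -
    obtain K' where "\<And>w. pderiv_var w (G i) = (\<Sum>i'<4. smul (iso_form_coeff i' w) (K' i'))"
      using iso_span_pderiv_var[OF G(1)[OF i]] by metis
    then have "\<exists>K. \<forall>w. pderiv_var w (G i) = (\<Sum>i'<4. smul (iso_form_coeff i' w) (K i'))"
      by blast
    from someI_ex[OF this] show ?thesis
      unfolding K_def by blast
  qed
  have "pderiv_var (a j) (pderiv_var (b j) F)
      = (\<Sum>i<4. \<Sum>i'<4. smul (iso_form_coeff i (b j) * iso_form_coeff i' (a j)) (K i i'))" for j
    unfolding G(2) pderiv_var_sum linear_op_smul[OF linear_op_pderiv_var] smul_sum_right smul_smul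
    by (intro sum.cong refl) (simp add: K smul_sum_right smul_smul)
  then have "(\<Sum>j\<in>J. pderiv_var (a j) (pderiv_var (b j) F))
      = (\<Sum>i<4. \<Sum>i'<4. \<Sum>j\<in>J. smul (iso_form_coeff i (b j) * iso_form_coeff i' (a j)) (K i i'))"
    by (simp only: sum.swap[of _ J])
  also have "\<dots> = (\<Sum>i<4. \<Sum>i'<4. smul (\<Sum>j\<in>J. iso_form_coeff i (b j) * iso_form_coeff i' (a j)) (K i i'))"
    by (simp only: smul_sum_left)
  also have "\<dots> = 0"
    by (simp add: isotropic)
  finally show ?thesis .
qed

text \<open>Isotropy, 1 * 1 + i * i = 0, together with the disjointness of the variables of different
  forms.\<close>

lemma iso_form_coeff_bilinear_zero:
  assumes "4 \<le> m" "i < 4" "i' < 4" "(a, b) \<in> {(Inl, Inl), (Inr, Inr), (Inr, Inl)}"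
  shows "(\<Sum>j<m. iso_form_coeff i (b j) * iso_form_coeff i' (a j)) = 0"
proof -
  have high: "iso_form_coeff i (Inl j) = 0" "iso_form_coeff i (Inr j) = 0" if "i < 4" "4 \<le> j" for i j
    using that by (auto simp: iso_coeff_def dest!: less_4_cases)
  have "(\<Sum>j<m. iso_form_coeff i (b j) * iso_form_coeff i' (a j))
      = (\<Sum>j<4. iso_form_coeff i (b j) * iso_form_coeff i' (a j))"
    using assms by (intro sum.mono_neutral_right) (auto simp: high)
  also have "\<dots> = 0"
  proof -
    have four: "(\<Sum>j<4. f j) = f 0 + f 1 + f 2 + (f 3 :: complex)" for f :: "nat \<Rightarrow> complex"
      by (simp add: numeral_eq_Suc)
    show ?thesis
      unfolding four using less_4_cases[OF assms(2)] less_4_cases[OF assms(3)] assms(4)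
      by (elim disjE insertE; simp add: iso_coeff_def)
  qed
  finally show ?thesis .
qed

lemma iso_span_harmonic:
  assumes "4 \<le> m" "F \<in> iso_span"
  shows "Delta_x m F = 0" "Delta_u m F = 0" "du_dx m F = 0"
  unfolding Delta_x_def Delta_u_def du_dx_def
  by (rule iso_span_second_order_zero[OF assms(2)], rule iso_form_coeff_bilinear_zero[OF assms(1)], simp_all)+

lemma mult_iso_in_Pspace:
  assumes "P \<in> Pspace m p q" "v1 \<in> vars m" "v2 \<in> vars m"
    "xdeg m (var_mono v2) = xdeg m (var_mono v1)" "udeg m (var_mono v2) = udeg m (var_mono v1)"
  shows "mult_iso v1 v2 P \<in> Pspace m (p + xdeg m (var_mono v1)) (q + udeg m (var_mono v1))"
  unfolding mult_iso_def using assms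
  by (intro add_in_Pspace smul_in_Pspace) (metis mult_var_in_Pspace)+

lemma iso_form_in_Pspace:
  assumes "4 \<le> m" "P \<in> Pspace m p q" "i < 4"
  shows "iso_form i P \<in> Pspace m (if i < 2 then p + 1 else p) (if i < 2 then q else q + 1)"
proof -
  have "mult_iso (Inl j1) (Inl j2) P \<in> Pspace m (p + 1) q"
    "mult_iso (Inr j1) (Inr j2) P \<in> Pspace m p (q + 1)" if "j1 < m" "j2 < m" for j1 j2
    using mult_iso_in_Pspace[OF assms(2), of "Inl j1" "Inl j2"]
      mult_iso_in_Pspace[OF assms(2), of "Inr j1" "Inr j2"] that by auto
  with less_4_cases[OF assms(3)] assms(1) show ?thesis
    by (auto simp: iso_form_def)
qed

lemma sum_smul_iso_coeff:
  assumes "j1 \<noteq> j2" "j1 < m" "j2 < m"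
  shows "(\<Sum>j<m. smul (iso_coeff (Inr j1) (Inr j2) (Inr j)) (mult_var (Inl j) F)) = mult_iso (Inl j1) (Inl j2) F"
proof -
  have "smul (iso_coeff (Inr j1) (Inr j2) (Inr j)) (mult_var (Inl j) F)
      = (if j1 = j then mult_var (Inl j1) F else 0) + (if j2 = j then smul \<i> (mult_var (Inl j2) F) else 0)" for j
    using assms(1) by (auto simp: iso_coeff_def)
  then show ?thesis
    using assms by (simp add: sum.distrib mult_iso_def)
qed

lemma x_du_mult_iso_Inl: "j1 \<noteq> j2 \<Longrightarrow> x_du m (mult_iso (Inl j1) (Inl j2) F) = mult_iso (Inl j1) (Inl j2) (x_du m F)"
  by (simp add: x_du_mult_iso iso_coeff_def)

lemma x_du_mult_iso_Inr:
  "j1 \<noteq> j2 \<Longrightarrow> j1 < m \<Longrightarrow> j2 < m \<Longrightarrow>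
    x_du m (mult_iso (Inr j1) (Inr j2) F) = mult_iso (Inr j1) (Inr j2) (x_du m F) + mult_iso (Inl j1) (Inl j2) F"
  by (simp add: x_du_mult_iso sum_smul_iso_coeff)

definition mult_det :: "cpoly \<Rightarrow> cpoly" where
  "mult_det F = iso_form 0 (iso_form 3 F) - iso_form 1 (iso_form 2 F)"

text \<open>The witness z_1^(k-l) (z_1 w_2 - z_2 w_1)^l: <x,d_u> kills z_1 and z_2 and maps w_1, w_2 to
  z_1, z_2, so it kills z_1 w_2 - z_2 w_1.\<close>

definition highest_weight :: "nat \<Rightarrow> nat \<Rightarrow> cpoly" where
  "highest_weight k l = (iso_form 0 ^^ (k - l)) ((mult_det ^^ l) poly_one)"

lemma linear_op_iso_form: "linear_op (iso_form i)"
  by (simp add: iso_form_def linear_op_mult_iso)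

lemma x_du_mult_det: "4 \<le> m \<Longrightarrow> x_du m (mult_det F) = mult_det (x_du m F)"
  using x_du_mult_iso_Inl[of 0 1] x_du_mult_iso_Inl[of 2 3] x_du_mult_iso_Inr[of 0 1 m]
    x_du_mult_iso_Inr[of 2 3 m] mult_iso_commute[of "Inl 0" "Inl 1" "Inl 2" "Inl 3"]
  by (simp add: mult_det_def iso_form_def linear_op_diff[OF linear_op_x_du]
      linear_op_add[OF linear_op_mult_iso] algebra_simps)

lemma mult_det_zero: "mult_det 0 = 0"
  by (simp add: mult_det_def linear_op_zero[OF linear_op_iso_form])

lemma mult_det_in_iso_span: "F \<in> iso_span \<Longrightarrow> mult_det F \<in> iso_span"
  unfolding mult_det_def diff_conv_add_uminus smul_neg_1[symmetric]
  by (intro iso_span.intros) simp_all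

lemma x_du_highest_weight: "4 \<le> m \<Longrightarrow> x_du m (highest_weight k l) = 0"
proof -
  assume m: "4 \<le> m"
  have "x_du m poly_one = 0"
    by (simp add: x_du_def pderiv_var_poly_one linear_op_zero[OF linear_op_mult_var])
  then have "x_du m ((mult_det ^^ n) poly_one) = 0" for n
    by (induction n) (simp_all add: x_du_mult_det[OF m] mult_det_zero)
  moreover have "x_du m ((iso_form 0 ^^ n) F) = (iso_form 0 ^^ n) (x_du m F)" for n F
    by (induction n) (simp_all add: iso_form_def x_du_mult_iso_Inl)
  ultimately show ?thesis
    by (simp add: highest_weight_def linear_op_zero[OF linear_op_funpow[OF linear_op_iso_form]])
qed

lemma highest_weight_in_iso_span: "highest_weight k l \<in> iso_span"
proof -
  have "(mult_det ^^ n) poly_one \<in> iso_span" for n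
    by (induction n) (simp_all add: iso_span.poly_one mult_det_in_iso_span)
  moreover have "F \<in> iso_span \<Longrightarrow> (iso_form 0 ^^ n) F \<in> iso_span" for n F
    by (induction n) (auto intro: iso_span.iso_form)
  ultimately show ?thesis
    by (simp add: highest_weight_def)
qed

lemma diff_in_Pspace: "P \<in> Pspace m p q \<Longrightarrow> Q \<in> Pspace m p q \<Longrightarrow> P - Q \<in> Pspace m p q"
  unfolding diff_conv_add_uminus smul_neg_1[symmetric] by (intro add_in_Pspace smul_in_Pspace)

lemma poly_one_in_Pspace: "poly_one \<in> Pspace m 0 0"
  by (simp add: Pspace_iff fin_supp_def poly_one_def xdeg_def udeg_def)

lemma mult_det_in_Pspace:
  assumes "4 \<le> m" "F \<in> Pspace m p q"
  shows "mult_det F \<in> Pspace m (Suc p) (Suc q)"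
proof -
  have "iso_form 3 F \<in> Pspace m p (Suc q)" "iso_form 2 F \<in> Pspace m p (Suc q)"
    using iso_form_in_Pspace[OF assms, of 3] iso_form_in_Pspace[OF assms, of 2] by simp_all
  then have "iso_form 0 (iso_form 3 F) \<in> Pspace m (Suc p) (Suc q)"
    "iso_form 1 (iso_form 2 F) \<in> Pspace m (Suc p) (Suc q)"
    using iso_form_in_Pspace[OF assms(1) \<open>iso_form 3 F \<in> _\<close>, of 0]
      iso_form_in_Pspace[OF assms(1) \<open>iso_form 2 F \<in> _\<close>, of 1] by simp_all
  then show ?thesis
    unfolding mult_det_def by (rule diff_in_Pspace)
qed

lemma highest_weight_in_Pspace:
  assumes "4 \<le> m" "l \<le> k"
  shows "highest_weight k l \<in> Pspace m k l"
proof -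
  have "(mult_det ^^ n) poly_one \<in> Pspace m n n" for n
    by (induction n) (simp_all add: poly_one_in_Pspace mult_det_in_Pspace[OF assms(1)])
  moreover have "(iso_form 0 ^^ n) F \<in> Pspace m (p + n) q" if F: "F \<in> Pspace m p q" for n F p q
  proof (induction n)
    case (Suc n)
    show ?case using iso_form_in_Pspace[OF assms(1) Suc.IH, of 0] by simp
  qed (simp add: F)
  ultimately have "(iso_form 0 ^^ (k - l)) ((mult_det ^^ l) poly_one) \<in> Pspace m (l + (k - l)) l"
    by blast
  with assms(2) show ?thesis
    by (simp add: highest_weight_def)
qed

definition restrict_vars :: "(nat + nat) set \<Rightarrow> cpoly \<Rightarrow> cpoly" where
  "restrict_vars S P = (\<lambda>\<alpha>. if Poly_Mapping.keys \<alpha> \<subseteq> S then P \<alpha> else 0)"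

lemma linear_op_restrict_vars: "linear_op (restrict_vars S)"
  unfolding linear_op_def restrict_vars_def smul_def by (auto simp: fun_eq_iff)

lemma restrict_vars_mult_var:
  "restrict_vars S (mult_var v P) = (if v \<in> S then mult_var v (restrict_vars S P) else 0)"
proof (rule ext)
  fix \<alpha>
  have keys: "Poly_Mapping.keys \<alpha> = insert v (Poly_Mapping.keys (\<alpha> - var_mono v))"
    if "0 < Poly_Mapping.lookup \<alpha> v"
    using that by (auto simp: in_keys_iff split: if_splits)
  show "restrict_vars S (mult_var v P) \<alpha> = (if v \<in> S then mult_var v (restrict_vars S P) else 0) \<alpha>"
    by (cases "0 < Poly_Mapping.lookup \<alpha> v") (auto simp: restrict_vars_def mult_var_def keys)
qed

lemma restrict_vars_poly_one: "restrict_vars S poly_one = poly_one"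
  by (auto simp: restrict_vars_def poly_one_def)

lemma mult_var_pow_apply: "(mult_var v ^^ n) Q (\<alpha> + Poly_Mapping.single v n) = Q \<alpha>"
proof (induction n)
  case (Suc n)
  have "\<alpha> + Poly_Mapping.single v (Suc n) = (\<alpha> + Poly_Mapping.single v n) + var_mono v"
    by (rule poly_mapping_eqI) simp
  with Suc show ?case
    by (simp add: mult_var_def)
qed simp

text \<open>Only the monomials in x_1 and u_3 survive the restriction, where z_1 and w_2 become x_1 and u_3
  while z_2 and w_1 vanish; so the coefficient of x_1^k u_3^l in the witness is 1.\<close>

lemma highest_weight_nonzero: "highest_weight k l \<noteq> 0"
proof
  define S where "S = {Inl 0, Inr 2 :: nat + nat}"
  define xu where "xu F = mult_var (Inl 0) (mult_var (Inr 2) F)" for F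
  have restrict_iso_form: "restrict_vars S (iso_form 0 F) = mult_var (Inl 0) (restrict_vars S F)"
    "restrict_vars S (iso_form (Suc 0) F) = 0" "restrict_vars S (iso_form 2 F) = 0"
    "restrict_vars S (iso_form 3 F) = mult_var (Inr 2) (restrict_vars S F)" for F
    by (simp_all add: S_def iso_form_def mult_iso_def linear_op_add[OF linear_op_restrict_vars]
        linear_op_smul[OF linear_op_restrict_vars] restrict_vars_mult_var)
  have "restrict_vars S (mult_det F) = xu (restrict_vars S F)" for F
    by (simp add: mult_det_def linear_op_diff[OF linear_op_restrict_vars] restrict_iso_form xu_def)
  then have "restrict_vars S ((mult_det ^^ n) poly_one) = (xu ^^ n) poly_one" for n
    by (induction n) (simp_all add: restrict_vars_poly_one)
  moreover have "restrict_vars S ((iso_form 0 ^^ n) F) = (mult_var (Inl 0) ^^ n) (restrict_vars S F)" for n F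
    by (induction n) (simp_all add: restrict_iso_form)
  ultimately have restricted: "restrict_vars S (highest_weight k l) = (mult_var (Inl 0) ^^ (k - l)) ((xu ^^ l) poly_one)"
    by (simp add: highest_weight_def)
  have "(xu ^^ n) Q (\<alpha> + Poly_Mapping.single (Inl 0) n + Poly_Mapping.single (Inr 2) n) = Q \<alpha>" for n Q \<alpha>
  proof (induction n)
    case (Suc n)
    have "\<alpha> + Poly_Mapping.single (Inl 0) (Suc n) + Poly_Mapping.single (Inr 2) (Suc n)
        = \<alpha> + Poly_Mapping.single (Inl 0) n + Poly_Mapping.single (Inr 2) n + var_mono (Inr 2) + var_mono (Inl 0)"
      by (rule poly_mapping_eqI) simp
    with Suc show ?case
      by (simp add: xu_def mult_var_def)
  qed simp
  from this[of l poly_one 0] have "(xu ^^ l) poly_one (Poly_Mapping.single (Inl 0) l + Poly_Mapping.single (Inr 2) l) = 1"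
    by (simp add: poly_one_def)
  then have "restrict_vars S (highest_weight k l)
      (Poly_Mapping.single (Inl 0) l + Poly_Mapping.single (Inr 2) l + Poly_Mapping.single (Inl 0) (k - l)) = 1"
    unfolding restricted mult_var_pow_apply .
  moreover assume "highest_weight k l = 0"
  ultimately show False
    by (simp add: linear_op_zero[OF linear_op_restrict_vars])
qed

lemma highest_weight_in_Hspace:
  assumes "4 \<le> m" "l \<le> k"
  shows "highest_weight k l \<in> Hspace m k l"
  using highest_weight_in_Pspace[OF assms] iso_span_harmonic[OF assms(1) highest_weight_in_iso_span]
    x_du_highest_weight[OF assms(1)]
  by (simp add: Hspace_iff)

theorem lemma4p1:
  fixes m k l :: nat
  assumes "m > 4" and "l \<le> k"
  shows "(\<forall>P \<in> Hspace m k l. S_u_pow m (k - l + 1) k l P = 0)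
     \<and> (\<forall>j \<le> k - l. \<exists>P \<in> Hspace m k l. S_u_pow m j k l P \<noteq> 0)"
proof -
  have S_u_pow: "S_u_pow m j k l P = (u_dx m ^^ j) P" if "P \<in> Hspace m k l" for j P
    using that by (simp add: Hspace_iff S_u_pow_eq_u_dx_pow del: S_u_pow.simps)
  have witness: "highest_weight k l \<in> Hspace m k l"
    using assms by (intro highest_weight_in_Hspace) simp_all
  show ?thesis
  proof (intro conjI ballI allI impI)
    fix P assume P: "P \<in> Hspace m k l"
    show "S_u_pow m (k - l + 1) k l P = 0"
      unfolding S_u_pow[OF P] using P assms(2) by (rule u_dx_pow_vanishes)
  next
    fix j assume "j \<le> k - l"
    then have "S_u_pow m j k l (highest_weight k l) \<noteq> 0"
      unfolding S_u_pow[OF witness] by (rule u_dx_pow_nonzero[OF witness highest_weight_nonzero])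
    with witness show "\<exists>P \<in> Hspace m k l. S_u_pow m j k l P \<noteq> 0"
      by blast
  qed
qed
end
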